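(* Let $k$ be sufficiently large and $m/n\ge195\cdot2^k\ln^2k/k$. Let $\mathcal M$ be any outcome of the greedy mist construction applied to $\Phi=\Phi_k(n,m)$. Then with probability $1-\exp(-\Omega(n))$, $$|\mathcal D(\Phi,\mathcal M)|\le2^n\exp(-2n/k^2).$$
   Context: $\Phi=\Phi_k(n,m)$ is a uniformly random $k$-CNF with $m$ clauses over $x_1,\dots,x_n$. $\rho=2^{-k}m/n$, $\kappa=\ln k/k$. $\mathcal U_\Phi(\sigma)$ is the number of clauses unsatisfied by $\sigma$, $T(\Phi)=\{\tau:\mathcal U_\Phi(\tau)\le n\rho/10\}$. $\mathrm{dist}$ is Hamming distance and $\mathcal D_\sigma(r_1,r_2)=\{\tau\in\{0,1\}^n:\lfloor r_1\kappa n\rfloor\le\mathrm{dist}(\sigma,\tau)\le\lfloor r_2\kappa n\rfloor\}$. Greedy mist construction: start with $\mathcal M=\emptyset$; while $T(\Phi)\setminus\bigcup_{\mu\in\mathcal M}\mathcal D_\mu(0,2)\ne\emptyset$, add an arbitrary element of this set to $\mathcal M$. $\mathcal D(\Phi,\mathcal M)=\bigcup_{\sigma\in\mathcal M}\mathcal D_\sigma(0,10)$. *)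

theory Defs
  imports Complex_Main
begin

text \<open>Variables x_1..x_n are represented by indices 0..n-1.
  A literal is a pair (i, b): it is satisfied by an assignment sigma iff sigma!i = b.
  A clause is a list of k literals, a formula a list of m clauses; Phi_k(n,m) is the
  uniform distribution on all such formulas (each clause uniform among the (2n)^k
  possible clauses, independently).\<close>

type_synonym literal = "nat \<times> bool"
type_synonym clause = "literal list"
type_synonym cnf = "clause list"
type_synonym assignment = "bool list"

definition kcnf_space :: "nat \<Rightarrow> nat \<Rightarrow> nat \<Rightarrow> cnf set" where
  "kcnf_space n k m = {\<Phi>. length \<Phi> = m \<and>
     (\<forall>C\<in>set \<Phi>. length C = k \<and> (\<forall>l\<in>set C. fst l < n))}"

definition prob_kcnf :: "nat \<Rightarrow> nat \<Rightarrow> nat \<Rightarrow> (cnf \<Rightarrow> bool) \<Rightarrow> real" where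
  "prob_kcnf n k m P = real (card {\<Phi> \<in> kcnf_space n k m. P \<Phi>}) / real (card (kcnf_space n k m))"

definition assignments :: "nat \<Rightarrow> assignment set" where
  "assignments n = {\<sigma>. length \<sigma> = n}"

definition lit_sat :: "assignment \<Rightarrow> literal \<Rightarrow> bool" where
  "lit_sat \<sigma> l = (\<sigma> ! fst l = snd l)"

definition clause_unsat :: "assignment \<Rightarrow> clause \<Rightarrow> bool" where
  "clause_unsat \<sigma> C = (\<forall>l\<in>set C. \<not> lit_sat \<sigma> l)"

definition num_unsat :: "cnf \<Rightarrow> assignment \<Rightarrow> nat" where
  "num_unsat \<Phi> \<sigma> = length (filter (clause_unsat \<sigma>) \<Phi>)"

definition rho :: "nat \<Rightarrow> nat \<Rightarrow> nat \<Rightarrow> real" where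
  "rho n k m = real m / (2 ^ k * real n)"

definition kappa :: "nat \<Rightarrow> real" where
  "kappa k = ln (real k) / real k"

definition Tset :: "nat \<Rightarrow> nat \<Rightarrow> cnf \<Rightarrow> assignment set" where
  "Tset n k \<Phi> = {\<tau> \<in> assignments n.
      real (num_unsat \<Phi> \<tau>) \<le> real n * rho n k (length \<Phi>) / 10}"

definition hdist :: "assignment \<Rightarrow> assignment \<Rightarrow> nat" where
  "hdist \<sigma> \<tau> = card {i. i < length \<sigma> \<and> \<sigma> ! i \<noteq> \<tau> ! i}"

definition Dball :: "nat \<Rightarrow> nat \<Rightarrow> assignment \<Rightarrow> real \<Rightarrow> real \<Rightarrow> assignment set" where
  "Dball n k \<sigma> r1 r2 = {\<tau> \<in> assignments n.
      \<lfloor>r1 * kappa k * real n\<rfloor> \<le> int (hdist \<sigma> \<tau>) \<and>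
      int (hdist \<sigma> \<tau>) \<le> \<lfloor>r2 * kappa k * real n\<rfloor>}"

inductive greedy_reach :: "nat \<Rightarrow> nat \<Rightarrow> cnf \<Rightarrow> assignment set \<Rightarrow> bool"
  for n k \<Phi> where
  start: "greedy_reach n k \<Phi> {}"
| step: "greedy_reach n k \<Phi> M \<Longrightarrow>
         \<tau> \<in> Tset n k \<Phi> - (\<Union>\<mu>\<in>M. Dball n k \<mu> 0 2) \<Longrightarrow>
         greedy_reach n k \<Phi> (insert \<tau> M)"

definition greedy_outcome :: "nat \<Rightarrow> nat \<Rightarrow> cnf \<Rightarrow> assignment set \<Rightarrow> bool" where
  "greedy_outcome n k \<Phi> M \<longleftrightarrow> greedy_reach n k \<Phi> M \<and>
     Tset n k \<Phi> - (\<Union>\<mu>\<in>M. Dball n k \<mu> 0 2) = {}"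

definition Dmist :: "nat \<Rightarrow> nat \<Rightarrow> assignment set \<Rightarrow> assignment set" where
  "Dmist n k M = (\<Union>\<sigma>\<in>M. Dball n k \<sigma> 0 10)"

end

theory Submission
  imports Defs
begin

text \<open>A first-moment argument. For a fixed assignment \<open>\<tau>\<close> the m clauses are independent
  and each is violated by \<open>\<tau>\<close> with probability \<open>2^-k\<close>, so \<open>E[exp(-U(\<tau>))] =
  (1 - (1 - 1/e)/2^k)^m \<le> exp(-(1 - 1/e) m/2^k)\<close>, and Markov's inequality makes
  \<open>U(\<tau>) \<le> m/(10 2^k)\<close> exponentially unlikely in \<open>m/2^k\<close>. Summing over all \<open>\<tau>\<close> gives
  \<open>E|T| \<le> 2^n exp(-(2/5) m/2^k)\<close>. The greedy centres lie in \<open>T\<close>, so the mist region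
  is covered by \<open>|T|\<close> Hamming balls of radius \<open>R = 10\<kappa>n\<close>, each of volume at most
  \<open>k^R (1 + 1/k)^n = exp(O(n ln\<^sup>2k/k))\<close>. Since \<open>m/2^k \<ge> 195 n ln\<^sup>2k/k\<close>, Markov's
  inequality applied to \<open>|T|\<close> finishes the proof with failure probability \<open>exp(-n ln\<^sup>2k/k)\<close>.\<close>

lemma sum_lists_length_Suc:
  assumes "finite A"
  shows "(\<Sum>xs\<in>{xs. set xs \<subseteq> A \<and> length xs = Suc m}. F xs)
       = (\<Sum>a\<in>A. \<Sum>xs\<in>{xs. set xs \<subseteq> A \<and> length xs = m}. F (a # xs))"
proof -
  have "(\<Sum>xs\<in>{xs. set xs \<subseteq> A \<and> length xs = Suc m}. F xs)
      = (\<Sum>(xs, a)\<in>{xs. set xs \<subseteq> A \<and> length xs = m} \<times> A. F (a # xs))"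
    unfolding lists_length_Suc_eq
    by (subst sum.reindex) (auto simp: inj_on_def intro!: sum.cong)
  also have "\<dots> = (\<Sum>a\<in>A. \<Sum>xs\<in>{xs. set xs \<subseteq> A \<and> length xs = m}. F (a # xs))"
    by (simp add: sum.cartesian_product [symmetric] sum.swap [of _ A])
  finally show ?thesis .
qed

lemma sum_prod_list_lists_length:
  fixes f :: "'a \<Rightarrow> 'b::comm_semiring_1"
  assumes "finite A"
  shows "(\<Sum>xs\<in>{xs. set xs \<subseteq> A \<and> length xs = m}. prod_list (map f xs)) = (\<Sum>a\<in>A. f a) ^ m"
proof (induction m)
  case 0
  have "{xs. set xs \<subseteq> A \<and> length xs = 0} = {[]}" by auto
  then show ?case by simp
next
  case (Suc m)
  then show ?case
    by (simp add: sum_lists_length_Suc [OF assms] sum_distrib_left [symmetric]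
        sum_distrib_right [symmetric])
qed

lemma card_le_sum_divide:
  fixes f :: "'a \<Rightarrow> real"
  assumes "finite S" "\<And>x. x \<in> S \<Longrightarrow> 0 \<le> f x" "c > 0"
  shows "real (card {x \<in> S. c \<le> f x}) \<le> (\<Sum>x\<in>S. f x) / c"
proof -
  have "real (card {x \<in> S. c \<le> f x}) * c = (\<Sum>x\<in>{x \<in> S. c \<le> f x}. c)"
    by simp
  also have "\<dots> \<le> (\<Sum>x\<in>{x \<in> S. c \<le> f x}. f x)"
    by (rule sum_mono) simp
  also have "\<dots> \<le> (\<Sum>x\<in>S. f x)"
    using assms(1,2) by (intro sum_mono2) auto
  finally show ?thesis
    using assms(3) by (simp add: pos_le_divide_eq)
qed

subsection \<open>The exponential moment of the number of unsatisfied clauses\<close>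

definition kcnf_clauses :: "nat \<Rightarrow> nat \<Rightarrow> clause set" where
  "kcnf_clauses n k = {C. set C \<subseteq> {0..<n} \<times> UNIV \<and> length C = k}"

lemma finite_kcnf_clauses: "finite (kcnf_clauses n k)"
  by (simp add: kcnf_clauses_def finite_lists_length_eq)

lemma card_kcnf_clauses: "card (kcnf_clauses n k) = (2 * n) ^ k"
  by (simp add: kcnf_clauses_def card_lists_length_eq card_cartesian_product)

lemma kcnf_space_eq_lists: "kcnf_space n k m = {\<Phi>. set \<Phi> \<subseteq> kcnf_clauses n k \<and> length \<Phi> = m}"
  unfolding kcnf_space_def kcnf_clauses_def by (fastforce simp: mem_Times_iff)

lemma finite_kcnf_space: "finite (kcnf_space n k m)"
  by (simp add: kcnf_space_eq_lists finite_lists_length_eq finite_kcnf_clauses)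

lemma card_kcnf_space: "card (kcnf_space n k m) = ((2 * n) ^ k) ^ m"
  by (simp add: kcnf_space_eq_lists card_lists_length_eq finite_kcnf_clauses card_kcnf_clauses)

lemma card_unsat_kcnf_clauses:
  assumes "length \<tau> = n"
  shows "card {C \<in> kcnf_clauses n k. clause_unsat \<tau> C} = n ^ k"
proof -
  have "(l \<in> {0..<n} \<times> UNIV \<and> \<not> lit_sat \<tau> l) \<longleftrightarrow> l \<in> (\<lambda>i. (i, \<not> \<tau> ! i)) ` {0..<n}" for l
    by (cases l) (auto simp: lit_sat_def)
  then have "{C \<in> kcnf_clauses n k. clause_unsat \<tau> C}
      = {C. set C \<subseteq> (\<lambda>i. (i, \<not> \<tau> ! i)) ` {0..<n} \<and> length C = k}"
    unfolding kcnf_clauses_def clause_unsat_def by blast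
  then show ?thesis
    by (simp add: card_lists_length_eq card_image inj_on_def)
qed

lemma exp_neg_num_unsat:
  "exp (- real (num_unsat \<Phi> \<tau>)) = (\<Prod>C\<leftarrow>\<Phi>. if clause_unsat \<tau> C then exp (-1) else 1)"
proof (induction \<Phi>)
  case Nil
  then show ?case by (simp add: num_unsat_def)
next
  case (Cons C \<Phi>)
  show ?case
    by (simp add: num_unsat_def mult_exp_exp flip: Cons.IH)
qed

lemma sum_exp_neg_num_unsat:
  assumes "length \<tau> = n"
  shows "(\<Sum>\<Phi>\<in>kcnf_space n k m. exp (- real (num_unsat \<Phi> \<tau>)))
       = real (card (kcnf_space n k m)) * (1 - (1 - exp (-1)) / 2 ^ k) ^ m"
proof -
  let ?h = "\<lambda>C. if clause_unsat \<tau> C then exp (-1) else (1::real)"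
  have "(\<Sum>C\<in>kcnf_clauses n k. if clause_unsat \<tau> C then 1 else 0)
      = real (card {C \<in> kcnf_clauses n k. clause_unsat \<tau> C})"
    using finite_kcnf_clauses by (simp add: sum.If_cases Int_def conj_commute)
  then have "(\<Sum>C\<in>kcnf_clauses n k. if clause_unsat \<tau> C then 1 else 0) = real (n ^ k)"
    by (simp add: card_unsat_kcnf_clauses [OF assms])
  moreover have "(\<Sum>C\<in>kcnf_clauses n k. ?h C)
      = (\<Sum>C\<in>kcnf_clauses n k. 1 - (1 - exp (-1)) * (if clause_unsat \<tau> C then 1 else 0))"
    by (intro sum.cong) auto
  ultimately have "(\<Sum>C\<in>kcnf_clauses n k. ?h C) = real ((2 * n) ^ k) - (1 - exp (-1)) * real (n ^ k)"
    by (simp add: sum_subtractf sum_distrib_left [symmetric] card_kcnf_clauses)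
  also have "\<dots> = real ((2 * n) ^ k) * (1 - (1 - exp (-1)) / 2 ^ k)"
    by (simp add: field_simps power_mult_distrib)
  finally have clause_sum: "(\<Sum>C\<in>kcnf_clauses n k. ?h C) = \<dots>" .
  have "(\<Sum>\<Phi>\<in>kcnf_space n k m. exp (- real (num_unsat \<Phi> \<tau>))) = (\<Sum>C\<in>kcnf_clauses n k. ?h C) ^ m"
    unfolding exp_neg_num_unsat kcnf_space_eq_lists
    by (rule sum_prod_list_lists_length [OF finite_kcnf_clauses])
  also have "\<dots> = real (card (kcnf_space n k m)) * (1 - (1 - exp (-1)) / 2 ^ k) ^ m"
    by (simp add: clause_sum card_kcnf_space power_mult_distrib)
  finally show ?thesis .
qed

lemma card_num_unsat_le:
  assumes "length \<tau> = n"
  shows "real (card {\<Phi> \<in> kcnf_space n k m. real (num_unsat \<Phi> \<tau>) \<le> a})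
       \<le> exp a * exp (- (1 - exp (-1)) * real m / 2 ^ k) * real (card (kcnf_space n k m))"
proof -
  let ?S = "kcnf_space n k m"
  have "real (card {\<Phi> \<in> ?S. real (num_unsat \<Phi> \<tau>) \<le> a})
      = real (card {\<Phi> \<in> ?S. exp (- a) \<le> exp (- real (num_unsat \<Phi> \<tau>))})"
    by simp
  also have "\<dots> \<le> (\<Sum>\<Phi>\<in>?S. exp (- real (num_unsat \<Phi> \<tau>))) / exp (- a)"
    by (rule card_le_sum_divide) (simp_all add: finite_kcnf_space)
  also have "\<dots> = exp a * real (card ?S) * (1 - (1 - exp (-1)) / 2 ^ k) ^ m"
    by (simp only: sum_exp_neg_num_unsat [OF assms] exp_minus [of a] divide_inverse inverse_inverse_eq mult_ac)
  also have "\<dots> \<le> exp a * real (card ?S) * exp (- (1 - exp (-1)) * real m / 2 ^ k)"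
  proof (intro mult_left_mono)
    have "(1 - exp (-1)) / 2 ^ k \<le> (1::real)"
      by (rule order_trans [of _ "1 - exp (-1)"]) (auto simp: divide_le_eq)
    moreover have "1 - (1 - exp (-1)) / (2::real) ^ k \<le> exp (- (1 - exp (-1)) / 2 ^ k)"
      using exp_ge_add_one_self [of "- (1 - exp (-1)) / (2::real) ^ k"]
      by (simp only: minus_divide_left [symmetric])
    ultimately have "(1 - (1 - exp (-1)) / (2::real) ^ k) ^ m \<le> exp (- (1 - exp (-1)) / 2 ^ k) ^ m"
      by (intro power_mono) simp_all
    then show "(1 - (1 - exp (-1)) / (2::real) ^ k) ^ m \<le> exp (- (1 - exp (-1)) * real m / 2 ^ k)"
      by (simp add: exp_of_nat_mult [symmetric] algebra_simps)
  qed simp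
  finally show ?thesis
    by (simp only: mult_ac)
qed

lemma assignments_eq_lists: "assignments n = {xs. set xs \<subseteq> UNIV \<and> length xs = n}"
  by (simp add: assignments_def)

lemma finite_assignments: "finite (assignments n)"
  unfolding assignments_eq_lists by (rule finite_lists_length_eq) simp

lemma card_assignments: "card (assignments n) = 2 ^ n"
  unfolding assignments_eq_lists by (subst card_lists_length_eq) simp_all

lemma sum_card_Tset_le:
  assumes "n \<ge> 1"
  shows "(\<Sum>\<Phi>\<in>kcnf_space n k m. real (card (Tset n k \<Phi>)))
       \<le> 2 ^ n * exp (real m / (10 * 2 ^ k)) * exp (- (1 - exp (-1)) * real m / 2 ^ k)
           * real (card (kcnf_space n k m))"
proof -
  let ?S = "kcnf_space n k m" and ?a = "real m / (10 * 2 ^ k)"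
  have Tset_eq: "Tset n k \<Phi> = {\<tau> \<in> assignments n. real (num_unsat \<Phi> \<tau>) \<le> ?a}" if "\<Phi> \<in> ?S" for \<Phi>
    using that assms by (auto simp: Tset_def kcnf_space_def rho_def field_simps)
  have "(\<Sum>\<Phi>\<in>?S. real (card (Tset n k \<Phi>)))
      = (\<Sum>\<Phi>\<in>?S. \<Sum>\<tau>\<in>assignments n. if real (num_unsat \<Phi> \<tau>) \<le> ?a then 1 else 0)"
    using finite_assignments by (intro sum.cong) (simp_all add: Tset_eq sum.If_cases Int_def conj_commute)
  also have "\<dots> = (\<Sum>\<tau>\<in>assignments n. real (card {\<Phi> \<in> ?S. real (num_unsat \<Phi> \<tau>) \<le> ?a}))"
    using finite_kcnf_space by (subst sum.swap) (simp add: sum.If_cases Int_def conj_commute)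
  also have "\<dots> \<le> (\<Sum>\<tau>\<in>assignments n.
                   exp ?a * exp (- (1 - exp (-1)) * real m / 2 ^ k) * real (card ?S))"
    by (intro sum_mono card_num_unsat_le) (simp add: assignments_def)
  finally show ?thesis
    by (simp add: card_assignments mult.assoc)
qed

subsection \<open>Hamming balls\<close>

lemma hdist_Cons:
  assumes "length \<sigma> = length \<tau>"
  shows "hdist (a # \<sigma>) (b # \<tau>) = (if a = b then 0 else 1) + hdist \<sigma> \<tau>"
proof -
  have "{i. i < length (a # \<sigma>) \<and> (a # \<sigma>) ! i \<noteq> (b # \<tau>) ! i}
      = (if a = b then {} else {0}) \<union> Suc ` {i. i < length \<sigma> \<and> \<sigma> ! i \<noteq> \<tau> ! i}"
    (is "?L = ?R")
  proof (rule set_eqI)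
    show "i \<in> ?L \<longleftrightarrow> i \<in> ?R" for i
      by (cases i) auto
  qed
  then show ?thesis
    unfolding hdist_def by (simp add: card_image)
qed

lemma sum_power_hdist:
  fixes y :: real
  assumes "length \<sigma> = n"
  shows "(\<Sum>\<tau>\<in>assignments n. y ^ hdist \<sigma> \<tau>) = (1 + y) ^ n"
  using assms
proof (induction \<sigma> arbitrary: n)
  case Nil
  have "assignments 0 = {[]}" by (auto simp: assignments_def)
  then show ?case using Nil by (simp add: hdist_def)
next
  case (Cons a \<sigma>)
  then obtain n' where n: "n = Suc n'" "length \<sigma> = n'" by auto
  have "(\<Sum>\<tau>\<in>assignments n. y ^ hdist (a # \<sigma>) \<tau>)
      = (\<Sum>b\<in>UNIV. \<Sum>\<tau>\<in>assignments n'. y ^ (if a = b then 0 else 1) * y ^ hdist \<sigma> \<tau>)"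
    unfolding assignments_eq_lists n(1) sum_lists_length_Suc [OF finite_UNIV]
    by (intro sum.cong refl) (simp add: hdist_Cons n(2) power_add)
  also have "\<dots> = (1 + y) ^ n"
    by (simp add: sum_distrib_left [symmetric] Cons.IH n UNIV_bool algebra_simps)
  finally show ?case .
qed

lemma card_hamming_ball_le:
  fixes t :: real
  assumes "length \<sigma> = n" "t \<ge> 1"
  shows "real (card {\<tau> \<in> assignments n. hdist \<sigma> \<tau> \<le> R}) \<le> t ^ R * (1 + 1 / t) ^ n"
proof -
  have "real (card {\<tau> \<in> assignments n. hdist \<sigma> \<tau> \<le> R})
      = (\<Sum>\<tau>\<in>assignments n. if hdist \<sigma> \<tau> \<le> R then 1 else 0)"
    using finite_assignments by (simp add: sum.If_cases Int_def conj_commute)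
  also have "\<dots> \<le> (\<Sum>\<tau>\<in>assignments n. t ^ R * (1 / t) ^ hdist \<sigma> \<tau>)"
  proof (rule sum_mono)
    fix \<tau>
    have "t ^ R * (1 / t) ^ d = t ^ (R - d)" if "d \<le> R" for d
      using that assms(2) by (simp add: power_diff power_one_over field_simps)
    then show "(if hdist \<sigma> \<tau> \<le> R then 1 else 0) \<le> t ^ R * (1 / t) ^ hdist \<sigma> \<tau>"
      using assms(2) by simp
  qed
  also have "\<dots> = t ^ R * (1 + 1 / t) ^ n"
    by (simp add: sum_distrib_left [symmetric] sum_power_hdist [OF assms(1)])
  finally show ?thesis .
qed

subsection \<open>The size of the mist region\<close>

lemma greedy_reach_subset_Tset: "greedy_reach n k \<Phi> M \<Longrightarrow> M \<subseteq> Tset n k \<Phi>"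
  by (induction rule: greedy_reach.induct) auto

lemma card_Dmist_le:
  assumes "greedy_reach n k \<Phi> M" "k \<ge> 1"
  shows "real (card (Dmist n k M))
       \<le> real (card (Tset n k \<Phi>)) * (real k ^ nat \<lfloor>10 * kappa k * real n\<rfloor> * (1 + 1 / real k) ^ n)"
    (is "_ \<le> _ * ?B")
proof -
  let ?R = "nat \<lfloor>10 * kappa k * real n\<rfloor>"
  have M_sub: "M \<subseteq> Tset n k \<Phi>" by (rule greedy_reach_subset_Tset [OF assms(1)])
  have fin_T: "finite (Tset n k \<Phi>)"
    by (rule finite_subset [OF _ finite_assignments]) (auto simp: Tset_def)
  then have fin_M: "finite M" using M_sub finite_subset by blast
  have ball_le: "real (card (Dball n k \<sigma> 0 10)) \<le> ?B" if "\<sigma> \<in> M" for \<sigma>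
  proof -
    have "length \<sigma> = n" using that M_sub by (auto simp: Tset_def assignments_def)
    moreover have "Dball n k \<sigma> 0 10 \<subseteq> {\<tau> \<in> assignments n. hdist \<sigma> \<tau> \<le> ?R}"
      by (auto simp: Dball_def)
    then have "card (Dball n k \<sigma> 0 10) \<le> card {\<tau> \<in> assignments n. hdist \<sigma> \<tau> \<le> ?R}"
      by (intro card_mono) (auto intro: finite_subset [OF _ finite_assignments])
    ultimately show ?thesis
      using card_hamming_ball_le [of \<sigma> n "real k" ?R] assms(2) by simp
  qed
  have "real (card (Dmist n k M)) \<le> (\<Sum>\<sigma>\<in>M. real (card (Dball n k \<sigma> 0 10)))"
    unfolding Dmist_def using card_UN_le [OF fin_M, of "\<lambda>\<sigma>. Dball n k \<sigma> 0 10"]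
    by (simp flip: of_nat_sum)
  also have "\<dots> \<le> real (card M) * ?B"
    using sum_mono [OF ball_le] by simp
  also have "\<dots> \<le> real (card (Tset n k \<Phi>)) * ?B"
    by (intro mult_right_mono) (use card_mono [OF fin_T M_sub] in auto)
  finally show ?thesis .
qed

lemma hamming_volume_le_exp:
  assumes "k \<ge> 3"
  shows "real k ^ nat \<lfloor>10 * kappa k * real n\<rfloor> * (1 + 1 / real k) ^ n
       \<le> exp (11 * ((ln (real k))\<^sup>2 / real k) * real n)"
proof -
  define L where "L = ln (real k)"
  have L_ge_1: "L \<ge> 1"
    unfolding L_def using assms exp_le by (subst ln_ge_iff) auto
  have R_le: "real (nat \<lfloor>10 * kappa k * real n\<rfloor>) \<le> 10 * (L / real k) * real n"
    using L_ge_1 by (simp add: kappa_def L_def)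
  have "real k ^ nat \<lfloor>10 * kappa k * real n\<rfloor> = exp (real (nat \<lfloor>10 * kappa k * real n\<rfloor>) * L)"
    using assms by (simp add: L_def exp_of_nat_mult)
  also have "\<dots> \<le> exp (10 * (L\<^sup>2 / real k) * real n)"
    using mult_right_mono [OF R_le, of L] L_ge_1 by (simp add: power2_eq_square algebra_simps)
  finally have pow_le: "real k ^ nat \<lfloor>10 * kappa k * real n\<rfloor> \<le> \<dots>" .
  have "(1 + 1 / real k) ^ n \<le> exp (1 / real k) ^ n"
    using assms exp_ge_add_one_self [of "1 / real k"] by (intro power_mono) auto
  also have "\<dots> = exp (real n / real k)"
    by (simp add: exp_of_nat_mult [symmetric])
  also have "\<dots> \<le> exp ((L\<^sup>2 / real k) * real n)"
    using assms mult_left_mono [OF one_le_power [OF L_ge_1, of 2], of "real n"] by (simp add: field_simps)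
  finally have "real k ^ nat \<lfloor>10 * kappa k * real n\<rfloor> * (1 + 1 / real k) ^ n
      \<le> exp (10 * (L\<^sup>2 / real k) * real n) * exp ((L\<^sup>2 / real k) * real n)"
    using pow_le by (intro mult_mono) auto
  then show ?thesis
    by (simp add: L_def flip: exp_add) (simp add: algebra_simps)
qed

lemma mist_exponent_le:
  assumes k: "k \<ge> 3" and P: "P \<ge> 195 * ((ln (real k))\<^sup>2 / real k) * real n"
  shows "real k ^ nat \<lfloor>10 * kappa k * real n\<rfloor> * (1 + 1 / real k) ^ n
           * exp (P / 10) * exp (- (1 - exp (-1)) * P) * exp (2 * real n / (real k)\<^sup>2)
       \<le> exp (- ((ln (real k))\<^sup>2 / real k) * real n)"
proof -
  define c where "c = (ln (real k))\<^sup>2 / real k"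
  have L_ge_1: "ln (real k) \<ge> 1"
    using k exp_le by (subst ln_ge_iff) auto
  then have c_ge: "c \<ge> 1 / real k"
    using k one_le_power [OF L_ge_1, of 2] by (simp add: c_def divide_right_mono)
  have P_c: "P \<ge> 195 * c * real n"
    using P by (simp add: c_def)
  moreover have cn_nonneg: "0 \<le> c * real n"
    by (simp add: c_def)
  ultimately have P_nonneg: "P \<ge> 0"
    by linarith
  have "exp (-1) \<le> (1 / 2 :: real)"
    using exp_ge_add_one_self [of 1] by (simp add: exp_minus field_simps)
  then have "exp (-1) * P \<le> 1 / 2 * P"
    using P_nonneg by (rule mult_right_mono)
  then have decay: "P / 10 - (1 - exp (-1)) * P \<le> - 78 * c * real n"
    using P_c by (simp add: left_diff_distrib)
  have "2 * real n / (real k)\<^sup>2 \<le> real n / real k"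
    using k mult_right_mono [of 2 "real k" "real n"] by (simp add: field_simps power2_eq_square)
  also have "\<dots> \<le> c * real n"
    using mult_right_mono [OF c_ge, of "real n"] by simp
  finally have "11 * c * real n + (P / 10 - (1 - exp (-1)) * P) + 2 * real n / (real k)\<^sup>2
      \<le> - c * real n"
    using decay cn_nonneg by linarith
  then have exponent_le: "exp (11 * c * real n) * exp (P / 10) * exp (- (1 - exp (-1)) * P)
      * exp (2 * real n / (real k)\<^sup>2) \<le> exp (- c * real n)"
    by (simp flip: exp_add add: algebra_simps)
  have "real k ^ nat \<lfloor>10 * kappa k * real n\<rfloor> * (1 + 1 / real k) ^ n
           * exp (P / 10) * exp (- (1 - exp (-1)) * P) * exp (2 * real n / (real k)\<^sup>2)
      \<le> exp (11 * c * real n) * exp (P / 10) * exp (- (1 - exp (-1)) * P)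
           * exp (2 * real n / (real k)\<^sup>2)"
    using hamming_volume_le_exp [OF k] by (intro mult_right_mono) (simp_all add: c_def)
  also note exponent_le
  finally show ?thesis
    by (simp add: c_def)
qed

lemma prob_kcnf_ge_if_card_compl_le:
  assumes "n \<ge> 1"
    and "real (card {\<Phi> \<in> kcnf_space n k m. \<not> P \<Phi>}) \<le> \<epsilon> * real (card (kcnf_space n k m))"
  shows "prob_kcnf n k m P \<ge> 1 - \<epsilon>"
proof -
  let ?S = "kcnf_space n k m"
  have card_S: "card ?S > 0"
    using assms(1) by (simp add: card_kcnf_space)
  have "card ?S = card {\<Phi> \<in> ?S. P \<Phi>} + card {\<Phi> \<in> ?S. \<not> P \<Phi>}"
    using finite_kcnf_space by (subst card_Un_disjoint [symmetric]) (auto intro: arg_cong [where f = card])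
  then have "prob_kcnf n k m P = (real (card ?S) - real (card {\<Phi> \<in> ?S. \<not> P \<Phi>})) / real (card ?S)"
    by (simp add: prob_kcnf_def)
  also have "\<dots> = 1 - real (card {\<Phi> \<in> ?S. \<not> P \<Phi>}) / real (card ?S)"
    using card_S by (simp add: diff_divide_distrib)
  also have "\<dots> \<ge> 1 - \<epsilon>"
    using assms(2) card_S by (simp add: divide_le_eq)
  finally show ?thesis .
qed

lemma prob_card_Dmist_le:
  assumes k: "k \<ge> 3" and n: "n \<ge> 1"
    and m: "real m / 2 ^ k \<ge> 195 * ((ln (real k))\<^sup>2 / real k) * real n"
  shows "prob_kcnf n k m (\<lambda>\<Phi>. \<forall>M. greedy_outcome n k \<Phi> M \<longrightarrow>
           real (card (Dmist n k M)) \<le> 2 ^ n * exp (- 2 * real n / (real k)\<^sup>2))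
       \<ge> 1 - exp (- ((ln (real k))\<^sup>2 / real k) * real n)"
proof -
  let ?S = "kcnf_space n k m"
  define Q where "Q = (2::real) ^ n * exp (- 2 * real n / (real k)\<^sup>2)"
  define B where "B = real k ^ nat \<lfloor>10 * kappa k * real n\<rfloor> * (1 + 1 / real k) ^ n"
  define good where "good = (\<lambda>\<Phi>. \<forall>M. greedy_outcome n k \<Phi> M \<longrightarrow> real (card (Dmist n k M)) \<le> Q)"
  have Q_pos: "Q > 0" and B_nonneg: "B \<ge> 0"
    by (simp_all add: Q_def B_def)
  have "{\<Phi> \<in> ?S. \<not> good \<Phi>} \<subseteq> {\<Phi> \<in> ?S. Q \<le> real (card (Tset n k \<Phi>)) * B}"
    using card_Dmist_le k by (fastforce simp: good_def greedy_outcome_def B_def)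
  then have "real (card {\<Phi> \<in> ?S. \<not> good \<Phi>})
      \<le> real (card {\<Phi> \<in> ?S. Q \<le> real (card (Tset n k \<Phi>)) * B})"
    by (simp add: card_mono finite_kcnf_space)
  also have "\<dots> \<le> (\<Sum>\<Phi>\<in>?S. real (card (Tset n k \<Phi>)) * B) / Q"
    by (rule card_le_sum_divide [OF finite_kcnf_space _ Q_pos]) (simp add: B_nonneg)
  also have "\<dots> \<le> 2 ^ n * exp (real m / (10 * 2 ^ k)) * exp (- (1 - exp (-1)) * real m / 2 ^ k)
                 * real (card ?S) * B / Q"
    using sum_card_Tset_le [OF n, of k m] B_nonneg Q_pos
    by (simp add: sum_distrib_right [symmetric] divide_right_mono mult_right_mono)
  also have "\<dots> = (B * exp ((real m / 2 ^ k) / 10) * exp (- (1 - exp (-1)) * (real m / 2 ^ k))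
                   * exp (2 * real n / (real k)\<^sup>2)) * real (card ?S)"
    by (simp add: Q_def exp_minus field_simps)
  also have "\<dots> \<le> exp (- ((ln (real k))\<^sup>2 / real k) * real n) * real (card ?S)"
    unfolding B_def by (intro mult_right_mono mist_exponent_le [OF k m]) auto
  finally have "prob_kcnf n k m good \<ge> 1 - exp (- ((ln (real k))\<^sup>2 / real k) * real n)"
    by (rule prob_kcnf_ge_if_card_compl_le [OF n])
  then show ?thesis
    unfolding good_def Q_def .
qed

theorem mainTheorem8:
  "\<exists>k0::nat. \<forall>k\<ge>k0. \<forall>m :: nat \<Rightarrow> nat.
     (\<forall>n\<ge>1. real (m n) / real n \<ge> 195 * 2 ^ k * (ln (real k))\<^sup>2 / real k) \<longrightarrow>
     (\<exists>c>0. \<exists>n0. \<forall>n\<ge>n0.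
        prob_kcnf n k (m n)
          (\<lambda>\<Phi>. \<forall>M. greedy_outcome n k \<Phi> M \<longrightarrow>
                 real (card (Dmist n k M)) \<le> 2 ^ n * exp (- 2 * real n / (real k)\<^sup>2))
        \<ge> 1 - exp (- c * real n))"
proof (intro exI [of _ "3::nat"] allI impI)
  fix k :: nat and m :: "nat \<Rightarrow> nat"
  assume k: "k \<ge> 3"
    and density: "\<forall>n\<ge>1. real (m n) / real n \<ge> 195 * 2 ^ k * (ln (real k))\<^sup>2 / real k"
  have "ln (real k) > 0" using k by simp
  then have c_pos: "(ln (real k))\<^sup>2 / real k > 0" using k by simp
  have m_density: "real (m n) / 2 ^ k \<ge> 195 * ((ln (real k))\<^sup>2 / real k) * real n" if "n \<ge> 1" for n
    using density that by (simp add: pos_divide_le_eq pos_le_divide_eq mult.commute mult.left_commute)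
  show "\<exists>c>0. \<exists>n0. \<forall>n\<ge>n0.
        prob_kcnf n k (m n)
          (\<lambda>\<Phi>. \<forall>M. greedy_outcome n k \<Phi> M \<longrightarrow>
                 real (card (Dmist n k M)) \<le> 2 ^ n * exp (- 2 * real n / (real k)\<^sup>2))
        \<ge> 1 - exp (- c * real n)"
    by (intro exI [of _ "(ln (real k))\<^sup>2 / real k"] exI [of _ 1] conjI c_pos allI impI
        prob_card_Dmist_le [OF k] m_density)
qed

end
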